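(* Let $\mathcal{F}=\mathcal{B}(K_3)$. Then, as $k\to\infty$, $$\frac{k}{2}-o(k)\;\le\; R_3(\mathcal{F},k)\;\le\;\frac{3k}{4}+o(k).$$
   Context: For a graph $G$, a hypergraph $H$ is a Berge-$G$ hypergraph if there are an injective map $\phi:V(G)\to V(H)$ and pairwise distinct hyperedges $e_{xy}\in E(H)$, one for each $xy\in E(G)$, with $\phi(x),\phi(y)\in e_{xy}$. $\mathcal{B}(G)$ denotes the family of all Berge-$G$ hypergraphs. $K_n^r$ denotes the complete $r$-uniform hypergraph on $n$ vertices. For a family $\mathcal{H}$ of $r$-uniform hypergraphs and integers $k\ge 2$, $r\ge 2$, the Ramsey number $R_r(\mathcal{H},k)$ is the smallest integer $n$ such that every coloring of the hyperedges of $K_n^r$ with $k$ colors contains a monochromatic subhypergraph belonging to $\mathcal{H}$. *)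

theory Defs
  imports Main "HOL-Library.Landau_Symbols"
begin

definition is_berge :: "'v set \<Rightarrow> 'v set set \<Rightarrow> 'u set \<Rightarrow> 'u set set \<Rightarrow> bool" where
  "is_berge VG EG VH EH \<longleftrightarrow>
     (\<exists>\<phi> f. inj_on \<phi> VG \<and> \<phi> ` VG \<subseteq> VH \<and> inj_on f EG \<and> f ` EG \<subseteq> EH \<and>
            (\<forall>e\<in>EG. \<phi> ` e \<subseteq> f e))"

definition berge_K3 :: "'u set \<Rightarrow> 'u set set \<Rightarrow> bool" where
  "berge_K3 VH EH \<longleftrightarrow> is_berge {0::nat, 1, 2} {{0, 1}, {1, 2}, {0, 2}} VH EH"

definition complete_edges :: "nat \<Rightarrow> nat \<Rightarrow> nat set set" where
  "complete_edges n r = {e. e \<subseteq> {..<n} \<and> card e = r}"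

definition ramsey_prop :: "nat \<Rightarrow> (nat set \<Rightarrow> nat set set \<Rightarrow> bool) \<Rightarrow> nat \<Rightarrow> nat \<Rightarrow> bool" where
  "ramsey_prop r F k n \<longleftrightarrow>
     (\<forall>\<chi> :: nat set \<Rightarrow> nat. (\<forall>e\<in>complete_edges n r. \<chi> e < k) \<longrightarrow>
        (\<exists>i<k. \<exists>V' E'. V' \<subseteq> {..<n} \<and> E' \<subseteq> {e\<in>complete_edges n r. \<chi> e = i} \<and>
                       (\<forall>e\<in>E'. e \<subseteq> V') \<and> F V' E'))"

definition ramsey_number :: "nat \<Rightarrow> (nat set \<Rightarrow> nat set set \<Rightarrow> bool) \<Rightarrow> nat \<Rightarrow> nat" where
  "ramsey_number r F k = (LEAST n. ramsey_prop r F k n)"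

end

theory Submission
  imports Defs "HOL-Number_Theory.Cong"
begin

text \<open>
  Upper bound: in a 3-uniform hypergraph without a Berge triangle, at most one of the three pairs
  of an edge lies in a second edge. Keeping, for every edge, two pairs covered by that edge alone
  gives a triangle-free graph with at least twice as many edges as the hypergraph, so Mantel's
  theorem bounds the number of edges by \<open>n\<^sup>2/8\<close>. Each of the \<open>k\<close> colour classes of \<open>K\<^sub>n\<^sup>3\<close> without a
  monochromatic Berge triangle is such a hypergraph, so \<open>k n\<^sup>2 \<ge> 8 (n choose 3)\<close>, which fails for
  \<open>n = 3k/4 + 4\<close>.

  Lower bound: on the vertices \<open>{..<m}\<close> with \<open>m \<le> 2\<^sup>s\<close>, colour a triple by the lowest bit \<open>t\<close> on
  which its elements are not all equal, the value \<open>h\<close> taken by two of them at that bit, and the sum of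
  the quotients of these two by \<open>2\<^sup>t\<^sup>+\<^sup>1\<close> modulo \<open>m div 2\<^sup>t\<^sup>+\<^sup>1 + 1\<close>. This uses at most \<open>2m + 2s\<close>
  colours. Within one colour class, every vertex with bit \<open>t\<close> equal to \<open>h\<close> has at most one possible
  partner, and every edge is such a partner pair plus a vertex with the other bit value; such a
  hypergraph has no Berge triangle. With \<open>s \<approx> log\<^sub>2 k\<close> this gives \<open>R \<ge> k/2 - O(log k)\<close>.
\<close>

lemma berge_K3E:
  assumes "berge_K3 V E"
  obtains p q w e1 e2 e3 where "p \<in> V" "q \<in> V" "w \<in> V" "p \<noteq> q" "q \<noteq> w" "p \<noteq> w"
    "e1 \<in> E" "e2 \<in> E" "e3 \<in> E" "e1 \<noteq> e2" "e2 \<noteq> e3" "e1 \<noteq> e3"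
    "{p, q} \<subseteq> e1" "{q, w} \<subseteq> e2" "{p, w} \<subseteq> e3"
proof -
  have edges_distinct: "{0::nat, 1} \<noteq> {1, 2}" "{1::nat, 2} \<noteq> {0, 2}" "{0::nat, 1} \<noteq> {0, 2}"
    by (auto simp: doubleton_eq_iff)
  obtain \<phi> f where "inj_on \<phi> {0::nat, 1, 2}" "\<phi> ` {0, 1, 2} \<subseteq> V"
    "inj_on f {{0::nat, 1}, {1, 2}, {0, 2}}" "f ` {{0, 1}, {1, 2}, {0, 2}} \<subseteq> E"
    "\<forall>e\<in>{{0::nat, 1}, {1, 2}, {0, 2}}. \<phi> ` e \<subseteq> f e"
    using assms unfolding berge_K3_def is_berge_def by metis
  moreover from this(1) have "\<phi> 0 \<noteq> \<phi> 1" "\<phi> 1 \<noteq> \<phi> 2" "\<phi> 0 \<noteq> \<phi> 2"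
    by (simp_all add: inj_on_def)
  moreover from calculation(3) edges_distinct
  have "f {0, 1} \<noteq> f {1, 2}" "f {1, 2} \<noteq> f {0, 2}" "f {0, 1} \<noteq> f {0, 2}"
    by (simp_all add: inj_on_def)
  ultimately show thesis
    by (intro that[of "\<phi> 0" "\<phi> 1" "\<phi> 2" "f {0, 1}" "f {1, 2}" "f {0, 2}"]) simp_all
qed

lemma berge_K3I:
  assumes "p \<in> V" "q \<in> V" "w \<in> V" "p \<noteq> q" "q \<noteq> w" "p \<noteq> w"
    "e1 \<in> E" "e2 \<in> E" "e3 \<in> E" "e1 \<noteq> e2" "e2 \<noteq> e3" "e1 \<noteq> e3"
    "{p, q} \<subseteq> e1" "{q, w} \<subseteq> e2" "{p, w} \<subseteq> e3"
  shows "berge_K3 V E"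
proof -
  define \<phi> where "\<phi> i = (if i = 0 then p else if i = 1 then q else w)" for i :: nat
  define f where "f s = (if 0 \<notin> s then e2 else if 1 \<in> s then e1 else e3)" for s :: "nat set"
  have "inj_on \<phi> {0, 1, 2}" "\<phi> ` {0, 1, 2} \<subseteq> V"
    using assms by (auto simp: \<phi>_def inj_on_def)
  moreover have "inj_on f {{0, 1}, {1, 2}, {0, 2}}" "f ` {{0, 1}, {1, 2}, {0, 2}} \<subseteq> E"
    using assms by (auto simp: f_def inj_on_def)
  moreover have "\<forall>e\<in>{{0::nat, 1}, {1, 2}, {0, 2}}. \<phi> ` e \<subseteq> f e"
    using assms by (simp add: f_def \<phi>_def)
  ultimately show ?thesis
    unfolding berge_K3_def is_berge_def by (intro exI[of _ \<phi>] exI[of _ f]) blast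
qed

lemma mantel:
  fixes G :: "'a set set"
  assumes "finite V" "\<And>p. p \<in> G \<Longrightarrow> p \<subseteq> V \<and> card p = 2"
    and "\<And>x y z. {x, y} \<in> G \<Longrightarrow> {y, z} \<in> G \<Longrightarrow> {x, z} \<in> G \<Longrightarrow> False"
  shows "4 * card G \<le> card V ^ 2"
  using assms
proof (induction "card V" arbitrary: V G rule: less_induct)
  case less
  show ?case
  proof (cases "G = {}")
    case False
    then obtain x y where xy: "{x, y} \<in> G" "x \<noteq> y"
      using less.prems(2) by (metis card_2_iff ex_in_conv)
    then have "x \<in> V" "y \<in> V" using less.prems(2) by auto
    define V' where "V' = V - {x, y}"
    define G' where "G' = {p \<in> G. p \<subseteq> V'}"
    define Nx where "Nx = {w \<in> V'. {x, w} \<in> G}"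
    define Ny where "Ny = {w \<in> V'. {y, w} \<in> G}"
    have card_V': "card V' + 2 = card V"
      using \<open>x \<in> V\<close> \<open>y \<in> V\<close> xy(2) less.prems(1) card_mono[of V "{x, y}"]
      by (simp add: V'_def card_Diff_subset)
    have "4 * card G' \<le> card V' ^ 2"
      using card_V' less.prems by (intro less.hyps) (auto simp: V'_def G'_def)
    moreover have "card Nx + card Ny \<le> card V'"
    proof -
      have "Nx \<inter> Ny = {}"
        using less.prems(3)[of x y] xy by (auto simp: Nx_def Ny_def insert_commute)
      moreover have "Nx \<union> Ny \<subseteq> V'" "finite V'"
        using less.prems(1) by (auto simp: Nx_def Ny_def V'_def)
      ultimately show ?thesis
        by (metis card_Un_disjoint card_mono finite_Un finite_subset)
    qed
    moreover have "card G \<le> card G' + card Nx + card Ny + 1"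
    proof -
      let ?X = "(\<lambda>w. {x, w}) ` Nx" and ?Y = "(\<lambda>w. {y, w}) ` Ny"
      have "G \<subseteq> G' \<union> ?X \<union> ?Y \<union> {{x, y}}"
      proof
        fix p assume "p \<in> G"
        moreover from this obtain a b where "p = {a, b}" "a \<noteq> b" "a \<in> V" "b \<in> V"
          using less.prems(2) by (metis card_2_iff insert_subset)
        ultimately show "p \<in> G' \<union> ?X \<union> ?Y \<union> {{x, y}}"
          by (auto simp: G'_def Nx_def Ny_def V'_def insert_commute)
      qed
      moreover have "finite G'" "finite Nx" "finite Ny"
        using less.prems(1,2) finite_subset[of G' "Pow V"]
        by (auto simp: G'_def Nx_def Ny_def V'_def)
      ultimately have "card G \<le> card (G' \<union> ?X \<union> ?Y \<union> {{x, y}})"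
        by (intro card_mono) auto
      also have "\<dots> \<le> card G' + card ?X + card ?Y + 1"
        using card_Un_le[of "G' \<union> ?X \<union> ?Y" "{{x, y}}"] card_Un_le[of "G' \<union> ?X" ?Y]
          card_Un_le[of G' ?X] by simp
      also have "\<dots> \<le> card G' + card Nx + card Ny + 1"
        using card_image_le \<open>finite Nx\<close> \<open>finite Ny\<close> by (intro add_mono) auto
      finally show ?thesis .
    qed
    ultimately have "4 * card G \<le> card V' ^ 2 + 4 * card V' + 4"
      by linarith
    also have "\<dots> = card V ^ 2"
      using card_V' by (simp add: power2_eq_square algebra_simps flip: card_V')
    finally show ?thesis .
  qed simp
qed

locale berge_K3_free_triple_system =
  fixes V :: "'a::linorder set" and H :: "'a set set"
  assumes finite_vertices: "finite V"
    and edge_subset: "\<And>h. h \<in> H \<Longrightarrow> h \<subseteq> V"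
    and card_edge: "\<And>h. h \<in> H \<Longrightarrow> card h = 3"
    and not_berge_K3: "\<not> berge_K3 V H"
begin

lemma finite_edges: "finite H"
  using finite_vertices edge_subset by (meson Pow_iff finite_Pow_iff finite_subset subsetI)

lemma finite_edge: "h \<in> H \<Longrightarrow> finite h"
  using card_edge by (metis card.infinite zero_neq_numeral)

lemma Max_in_edge: "h \<in> H \<Longrightarrow> Max h \<in> h"
  using finite_edge card_edge by (metis Max_in card.empty zero_neq_numeral)

lemma no_berge_triangle:
  assumes "p \<noteq> q" "q \<noteq> w" "p \<noteq> w" "e1 \<in> H" "e2 \<in> H" "e3 \<in> H"
    and "{p, q} \<subseteq> e1" "{q, w} \<subseteq> e2" "{p, w} \<subseteq> e3"
  shows "e1 = e2 \<or> e2 = e3 \<or> e1 = e3"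
  using berge_K3I[of p V q w e1 H e2 e3] assms edge_subset not_berge_K3 by blast

lemma edge_eq:
  assumes "h \<in> H" "{x, y, z} \<subseteq> h" "x \<noteq> y" "y \<noteq> z" "x \<noteq> z"
  shows "h = {x, y, z}"
  using assms card_edge[OF assms(1)] finite_edge[OF assms(1)] by (intro card_subset_eq[symmetric]) auto

lemma edge_obtain_third:
  assumes "h \<in> H" "x \<in> h" "y \<in> h" "x \<noteq> y"
  obtains z where "h = {x, y, z}" "z \<noteq> x" "z \<noteq> y"
  using card_edge[OF assms(1)] assms(2-4) by (auto simp: card_3_iff)

definition uniquely_covered :: "'a set \<Rightarrow> bool" where
  "uniquely_covered p \<longleftrightarrow> (\<exists>!h. h \<in> H \<and> p \<subseteq> h)"

lemma uniquely_covered_eq: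
  "uniquely_covered p \<Longrightarrow> h \<in> H \<Longrightarrow> h' \<in> H \<Longrightarrow> p \<subseteq> h \<Longrightarrow> p \<subseteq> h' \<Longrightarrow> h = h'"
  unfolding uniquely_covered_def by blast

lemma uniquely_coveredE:
  assumes "uniquely_covered p"
  obtains h where "h \<in> H" "p \<subseteq> h"
  using assms unfolding uniquely_covered_def by blast

lemma uniquely_covered_if_other_pair_not:
  assumes "h \<in> H" "x \<in> h" "y \<in> h" "x \<noteq> y" "\<not> uniquely_covered (h - {x})"
  shows "uniquely_covered (h - {y})"
proof -
  obtain z where h: "h = {x, y, z}" "z \<noteq> x" "z \<noteq> y"
    using edge_obtain_third[OF assms(1-4)] .
  have pairs: "h - {x} = {y, z}" "h - {y} = {x, z}"
    using h assms(4) by auto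
  obtain h2 where h2: "h2 \<in> H" "{y, z} \<subseteq> h2" "h2 \<noteq> h"
    using assms(1,5) h(1) unfolding pairs uniquely_covered_def by blast
  have unique: "h3 = h" if h3: "h3 \<in> H" "{x, z} \<subseteq> h3" for h3
  proof (rule ccontr)
    assume "h3 \<noteq> h"
    moreover have "h2 \<noteq> h3"
      using edge_eq[OF h2(1), of x y z] h h2 h3 assms(4) by auto
    moreover have "h2 = h3 \<or> h3 = h \<or> h2 = h"
      by (rule no_berge_triangle[of y z x]) (use h h2 h3 assms(1,4) in auto)
    ultimately show False
      using h2(3) by blast
  qed
  show ?thesis
    unfolding pairs uniquely_covered_def
    by (rule ex1I[of _ h]) (use assms(1) h(1) unique in auto)
qed

definition all_pairs_uniquely_covered :: "'a set \<Rightarrow> bool" where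
  "all_pairs_uniquely_covered h \<longleftrightarrow> (\<forall>x\<in>h. uniquely_covered (h - {x}))"

text \<open>Leaving out one pair of each edge whose three pairs are all uniquely covered keeps that edge
  from becoming a triangle of the graph.\<close>

definition aux_graph :: "'a set set" where
  "aux_graph = {h - {x} | h x. h \<in> H \<and> x \<in> h \<and> uniquely_covered (h - {x}) \<and> (all_pairs_uniquely_covered h \<longrightarrow> x \<noteq> Max h)}"

lemma aux_graphI:
  "h \<in> H \<Longrightarrow> x \<in> h \<Longrightarrow> uniquely_covered (h - {x}) \<Longrightarrow> (all_pairs_uniquely_covered h \<Longrightarrow> x \<noteq> Max h) \<Longrightarrow> h - {x} \<in> aux_graph"
  unfolding aux_graph_def by blast

lemma aux_graphE:
  assumes "p \<in> aux_graph"
  obtains h x where "p = h - {x}" "h \<in> H" "x \<in> h" "uniquely_covered p" "all_pairs_uniquely_covered h \<Longrightarrow> x \<noteq> Max h"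
  using assms unfolding aux_graph_def by blast

lemma aux_graph_edge: "p \<in> aux_graph \<Longrightarrow> p \<subseteq> V \<and> card p = 2"
  by (erule aux_graphE) (use edge_subset card_edge finite_edge in auto)

lemma finite_aux_graph: "finite aux_graph"
  using finite_vertices aux_graph_edge by (meson Pow_iff finite_Pow_iff finite_subset subsetI)

lemma aux_graph_uniquely_covered: "p \<in> aux_graph \<Longrightarrow> uniquely_covered p"
  by (erule aux_graphE)

lemma aux_graph_distinct: "{x, y} \<in> aux_graph \<Longrightarrow> x \<noteq> y"
  using aux_graph_edge[of "{x, y}"] by (cases "x = y") auto

lemma Max_pair_notin_aux_graph:
  assumes "h \<in> H" "all_pairs_uniquely_covered h"
  shows "h - {Max h} \<notin> aux_graph"
proof
  assume "h - {Max h} \<in> aux_graph"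
  then obtain h' x where h': "h - {Max h} = h' - {x}" "h' \<in> H" "x \<in> h'"
    "uniquely_covered (h' - {x})" "all_pairs_uniquely_covered h' \<Longrightarrow> x \<noteq> Max h'"
    by (rule aux_graphE) simp
  then have "h' = h"
    using uniquely_covered_eq[of "h' - {x}" h' h] assms(1) by auto
  then show False
    using h' assms Max_in_edge[OF assms(1)] by blast
qed

lemma aux_graph_triangle_free:
  assumes "{x, y} \<in> aux_graph" "{y, z} \<in> aux_graph" "{x, z} \<in> aux_graph"
  shows False
proof -
  have distinct: "x \<noteq> y" "y \<noteq> z" "x \<noteq> z"
    using assms by (simp_all add: aux_graph_distinct)
  have covered: "uniquely_covered {x, y}" "uniquely_covered {y, z}" "uniquely_covered {x, z}"
    using assms by (simp_all add: aux_graph_uniquely_covered)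
  show False
  proof (cases "\<exists>h\<in>H. {x, y, z} \<subseteq> h")
    case True
    then obtain h where h: "h \<in> H" "{x, y, z} \<subseteq> h"
      by blast
    have "h = {x, y, z}"
      by (rule edge_eq[OF h distinct])
    moreover from this have "h - {x} = {y, z}" "h - {y} = {x, z}" "h - {z} = {x, y}"
      using distinct by auto
    ultimately have pairs: "\<forall>v\<in>h. h - {v} \<in> aux_graph"
      using assms by auto
    then have "all_pairs_uniquely_covered h"
      unfolding all_pairs_uniquely_covered_def using aux_graph_uniquely_covered by blast
    then show False
      using Max_pair_notin_aux_graph[OF h(1)] Max_in_edge[OF h(1)] pairs by blast
  next
    case False
    obtain e1 e2 e3 where e: "e1 \<in> H" "e2 \<in> H" "e3 \<in> H"
      and incidences: "{x, y} \<subseteq> e1" "{y, z} \<subseteq> e2" "{x, z} \<subseteq> e3"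
      using uniquely_coveredE[OF covered(1)] uniquely_coveredE[OF covered(2)]
        uniquely_coveredE[OF covered(3)] by metis
    have "e1 \<noteq> e2" "e2 \<noteq> e3" "e1 \<noteq> e3"
      using False e incidences by blast+
    then show False
      using no_berge_triangle[OF distinct e incidences] by blast
  qed
qed

lemma aux_graph_pairs_of_edge:
  assumes "h \<in> H"
  obtains x where "x \<in> h" "\<And>y. y \<in> h - {x} \<Longrightarrow> h - {y} \<in> aux_graph"
proof (cases "all_pairs_uniquely_covered h")
  case True
  then have "h - {y} \<in> aux_graph" if "y \<in> h - {Max h}" for y
    using that assms unfolding all_pairs_uniquely_covered_def by (intro aux_graphI) auto
  then show ?thesis
    using that Max_in_edge[OF assms] by blast
next
  case False
  then obtain x where x: "x \<in> h" "\<not> uniquely_covered (h - {x})"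
    unfolding all_pairs_uniquely_covered_def by blast
  then have "h - {y} \<in> aux_graph" if "y \<in> h - {x}" for y
    using that assms False uniquely_covered_if_other_pair_not[OF assms x(1) _ _ x(2)]
    by (intro aux_graphI) auto
  then show ?thesis
    using that x(1) by blast
qed

lemma two_le_card_aux_graph_in_edge:
  assumes "h \<in> H"
  shows "2 \<le> card {p \<in> aux_graph. p \<subseteq> h}"
proof -
  obtain x where x: "x \<in> h" "\<And>y. y \<in> h - {x} \<Longrightarrow> h - {y} \<in> aux_graph"
    using aux_graph_pairs_of_edge[OF assms] by blast
  have "2 = card (h - {x})"
    using card_edge[OF assms] finite_edge[OF assms] x(1) by simp
  also have "\<dots> = card ((\<lambda>y. h - {y}) ` (h - {x}))"
    by (rule card_image[symmetric]) (auto simp: inj_on_def)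
  also have "\<dots> \<le> card {p \<in> aux_graph. p \<subseteq> h}"
    using x(2) finite_aux_graph by (intro card_mono) auto
  finally show ?thesis .
qed

lemma two_mult_card_edges_le: "2 * card H \<le> card aux_graph"
proof -
  have "2 * card H = (\<Sum>h\<in>H. 2)"
    by simp
  also have "\<dots> \<le> (\<Sum>h\<in>H. card {p \<in> aux_graph. p \<subseteq> h})"
    using two_le_card_aux_graph_in_edge by (rule sum_mono)
  also have "\<dots> = card (\<Union>h\<in>H. {p \<in> aux_graph. p \<subseteq> h})"
    using finite_edges finite_aux_graph uniquely_covered_eq aux_graph_uniquely_covered
    by (intro card_UN_disjoint[symmetric]) auto
  also have "\<dots> \<le> card aux_graph"
    using finite_aux_graph by (intro card_mono) auto
  finally show ?thesis .
qed

theorem card_edges_le: "8 * card H \<le> card V ^ 2"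
proof -
  have "4 * card aux_graph \<le> card V ^ 2"
    by (rule mantel[OF finite_vertices aux_graph_edge aux_graph_triangle_free])
  then show ?thesis
    using two_mult_card_edges_le by linarith
qed

end

lemma six_mult_choose_three: "6 * (n choose 3) = n * (n - 1) * (n - 2)"
proof (cases "n \<ge> 3")
  case True
  then obtain m where "n = 3 + m"
    using le_Suc_ex by blast
  then have m: "n = Suc (Suc (Suc m))"
    by simp
  have "fact 3 * fact m * (n choose 3) = fact n"
    using binomial_fact_lemma[of 3 n] True by (simp add: m)
  also have "fact n = n * (n - 1) * (n - 2) * (fact m :: nat)"
    by (simp add: m algebra_simps)
  finally have "fact m * (6 * (n choose 3)) = fact m * (n * (n - 1) * (n - 2))"
    by (simp add: fact_numeral mult_ac)
  then show ?thesis
    by simp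
next
  case False
  then have "n = 0 \<or> n = 1 \<or> n = 2" by auto
  then show ?thesis by auto
qed

lemma ramsey_prop_3_berge_K3_if:
  assumes "k * n ^ 2 < 8 * (n choose 3)"
  shows "ramsey_prop 3 berge_K3 k n"
  unfolding ramsey_prop_def
proof (intro allI impI, rule ccontr)
  fix \<chi> :: "nat set \<Rightarrow> nat"
  assume colouring: "\<forall>e\<in>complete_edges n 3. \<chi> e < k"
  define colour_class where "colour_class i = {e \<in> complete_edges n 3. \<chi> e = i}" for i
  have colour_class_edges: "e \<subseteq> {..<n}" "card e = 3" if "e \<in> colour_class i" for e i
    using that by (auto simp: colour_class_def complete_edges_def)
  assume no_monochromatic:
    "\<not> (\<exists>i<k. \<exists>V' E'. V' \<subseteq> {..<n} \<and> E' \<subseteq> colour_class i \<and> (\<forall>e\<in>E'. e \<subseteq> V') \<and> berge_K3 V' E')"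
  have colour_class_small: "8 * card (colour_class i) \<le> n ^ 2" if "i < k" for i
  proof -
    have "\<not> berge_K3 {..<n} (colour_class i)"
      using no_monochromatic that colour_class_edges(1) by blast
    then interpret berge_K3_free_triple_system "{..<n}" "colour_class i"
      using colour_class_edges by unfold_locales auto
    show ?thesis
      using card_edges_le by simp
  qed
  have "complete_edges n 3 = (\<Union>i<k. colour_class i)"
    using colouring by (auto simp: colour_class_def)
  moreover have "card (complete_edges n 3) = n choose 3"
    unfolding complete_edges_def using n_subsets[of "{..<n}" 3] by simp
  ultimately have "8 * (n choose 3) = 8 * card (\<Union>i<k. colour_class i)"
    by simp
  also have "\<dots> \<le> 8 * (\<Sum>i<k. card (colour_class i))"
    using card_UN_le[of "{..<k}" colour_class] by simp
  also have "\<dots> \<le> k * n ^ 2"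
    using sum_mono[of "{..<k}" "\<lambda>i. 8 * card (colour_class i)" "\<lambda>_. n ^ 2"] colour_class_small
    by (simp add: sum_distrib_left)
  finally show False
    using assms by simp
qed

lemma ramsey_prop_3_berge_K3_three_quarters: "ramsey_prop 3 berge_K3 k (3 * k div 4 + 4)"
proof -
  define n where "n = 3 * k div 4 + 4"
  define m where "m = n - 2"
  have n: "n = m + 2"
    unfolding m_def n_def by simp
  have "3 * k + 5 \<le> 4 * m"
    unfolding m_def n_def by presburger
  then have "(3 * k + 5) * (m + 2) \<le> 4 * m * (m + 2)"
    by (rule mult_le_mono1)
  then have "3 * k * (m + 2) < 4 * m * (m + 1)"
    by (simp add: algebra_simps)
  then have "3 * k * (m + 2) * (m + 2) < 4 * m * (m + 1) * (m + 2)"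
    by (rule mult_strict_right_mono) simp
  then have "k * n ^ 2 < 8 * (n choose 3)"
    using six_mult_choose_three[of n] unfolding n by (simp add: power2_eq_square algebra_simps)
  then show ?thesis
    unfolding n_def by (rule ramsey_prop_3_berge_K3_if)
qed

lemma ramsey_number_3_berge_K3_le: "ramsey_number 3 berge_K3 k \<le> 3 * k div 4 + 4"
  unfolding ramsey_number_def by (rule Least_le) (rule ramsey_prop_3_berge_K3_three_quarters)

context
  fixes A :: "'a set" and partner :: "'a \<Rightarrow> 'a \<Rightarrow> bool" and E :: "'a set set"
  assumes partner_sym: "\<And>x y. partner x y \<Longrightarrow> partner y x"
    and partner_unique: "\<And>x y y'. partner x y \<Longrightarrow> partner x y' \<Longrightarrow> y = y'"
    and edge_shape: "\<And>e. e \<in> E \<Longrightarrow> \<exists>x y z. e = {x, y, z} \<and> x \<in> A \<and> y \<in> A \<and> z \<notin> A \<and> partner x y"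
begin

lemma partner_in_edge:
  assumes "e \<in> E" "a \<in> e" "a \<in> A" "partner a b"
  shows "b \<in> e"
  using edge_shape[OF assms(1)] assms(2-4) partner_sym partner_unique by blast

lemma partner_if_in_edge:
  assumes "e \<in> E" "a \<in> e" "b \<in> e" "a \<in> A" "b \<in> A" "a \<noteq> b"
  shows "partner a b"
  using edge_shape[OF assms(1)] assms(2-6) partner_sym by blast

lemma edge_eq_partner_pair:
  assumes "e \<in> E" "a \<in> e" "b \<in> e" "a \<in> A" "b \<notin> A"
  obtains a' where "partner a a'" "e = {a, a', b}"
proof -
  obtain x y z where "e = {x, y, z}" "x \<in> A" "y \<in> A" "z \<notin> A" "partner x y"
    using edge_shape[OF assms(1)] by blast
  then show ?thesis
    using assms(2-5) partner_sym[of x y] that[of y] that[of x] by (auto simp: insert_commute)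
qed

lemma edge_eq_if_shares_inside_and_outside:
  assumes "e \<in> E" "e' \<in> E" "a \<in> e" "a \<in> e'" "b \<in> e" "b \<in> e'" "a \<in> A" "b \<notin> A"
  shows "e = e'"
proof -
  obtain a1 where a1: "partner a a1" "e = {a, a1, b}"
    using edge_eq_partner_pair[OF assms(1,3,5,7,8)] .
  obtain a2 where a2: "partner a a2" "e' = {a, a2, b}"
    using edge_eq_partner_pair[OF assms(2,4,6,7,8)] .
  show ?thesis using a1 a2 partner_unique[OF a1(1) a2(1)] by simp
qed

lemma outside_in_edge_unique:
  assumes "e \<in> E" "a \<in> e" "b \<in> e" "a \<notin> A" "b \<notin> A"
  shows "a = b"
  using edge_shape[OF assms(1)] assms(2-5) by blast

lemma berge_triangle_with_outside_vertex:
  assumes "e1 \<in> E" "e2 \<in> E" "e3 \<in> E" "{c, a} \<subseteq> e1" "{a, b} \<subseteq> e2" "{c, b} \<subseteq> e3"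
    and "c \<notin> A" "a \<in> A" "b \<in> A" "a \<noteq> b"
  shows "e1 = e3"
proof -
  have "partner a b"
    by (rule partner_if_in_edge[OF assms(2) _ _ assms(8-10)]) (use assms(5) in auto)
  then have "b \<in> e1"
    using partner_in_edge[OF assms(1) _ assms(8)] assms(4) by auto
  then show ?thesis
    by (rule edge_eq_if_shares_inside_and_outside[OF assms(1,3) _ _ _ _ assms(9,7)])
      (use assms(4,6) in auto)
qed

lemma not_berge_K3_if_partner_structure: "\<not> berge_K3 V E"
proof
  assume "berge_K3 V E"
  then obtain p q w e1 e2 e3 where distinct: "p \<noteq> q" "q \<noteq> w" "p \<noteq> w"
    and edges: "e1 \<in> E" "e2 \<in> E" "e3 \<in> E" "e1 \<noteq> e2" "e2 \<noteq> e3" "e1 \<noteq> e3"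
    and incidences: "{p, q} \<subseteq> e1" "{q, w} \<subseteq> e2" "{p, w} \<subseteq> e3"
    by (rule berge_K3E)
  have at_most_one_outside: "\<not> (p \<notin> A \<and> q \<notin> A)" "\<not> (q \<notin> A \<and> w \<notin> A)" "\<not> (p \<notin> A \<and> w \<notin> A)"
    using outside_in_edge_unique[OF edges(1), of p q] outside_in_edge_unique[OF edges(2), of q w]
      outside_in_edge_unique[OF edges(3), of p w] incidences distinct by auto
  consider "p \<in> A" "q \<in> A" "w \<in> A" | "p \<notin> A" "q \<in> A" "w \<in> A"
    | "q \<notin> A" "p \<in> A" "w \<in> A" | "w \<notin> A" "p \<in> A" "q \<in> A"
    using at_most_one_outside by blast
  then show False
  proof cases
    case 1
    then have "partner p q" "partner p w"
      using partner_if_in_edge[OF edges(1), of p q] partner_if_in_edge[OF edges(3), of p w]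
        incidences distinct by auto
    then show False using partner_unique distinct by blast
  next
    case 2
    then show False
      using berge_triangle_with_outside_vertex[OF edges(1-3)] edges(6) incidences distinct by auto
  next
    case 3
    then show False
      using berge_triangle_with_outside_vertex[OF edges(1,3,2), of q p w] edges(4) incidences distinct
      by (auto simp: insert_commute)
  next
    case 4
    then show False
      using berge_triangle_with_outside_vertex[OF edges(3,1,2), of w p q] edges(5) incidences distinct
      by (auto simp: insert_commute)
  qed
qed

end

lemma two_one_split:
  fixes P :: "'a \<Rightarrow> bool"
  assumes "e = {a, b, c}" "a \<noteq> b" "b \<noteq> c" "a \<noteq> c" "\<not> (P a = P b \<and> P b = P c)"
  obtains x y z where "e = {x, y, z}" "x \<noteq> y" "P x = (\<exists>u\<in>e. \<exists>v\<in>e. u \<noteq> v \<and> P u \<and> P v)"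
    "P y = P x" "P z \<noteq> P x"
proof (cases "P a = P b")
  case True
  then show ?thesis
    using assms that[of a b c] by auto
next
  case False
  show ?thesis
  proof (cases "P c = P a")
    case True
    then show ?thesis
      using assms False that[of a c b] by (auto simp: insert_commute)
  next
    case False
    then show ?thesis
      using assms \<open>P a \<noteq> P b\<close> that[of b c a] by (auto simp: insert_commute)
  qed
qed

lemma mod_pow2_eq_if_bits_eq:
  fixes x y :: nat
  assumes "\<And>i. i < n \<Longrightarrow> bit x i = bit y i"
  shows "x mod 2 ^ n = y mod 2 ^ n"
proof -
  have "take_bit n x = take_bit n y"
    using assms by (auto simp: bit_eq_iff bit_take_bit_iff)
  then show ?thesis
    by (simp add: take_bit_eq_mod)
qed

lemma not_bit_if_less_pow2:
  fixes x :: nat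
  assumes "x < 2 ^ s" "s \<le> t"
  shows "\<not> bit x t"
proof -
  have "x < 2 ^ t"
    using assms by (meson less_le_trans one_le_numeral power_increasing)
  then show ?thesis
    by (simp add: bit_iff_odd)
qed

definition split_level :: "nat set \<Rightarrow> nat" where
  "split_level e = (LEAST t. \<exists>u\<in>e. \<exists>v\<in>e. bit u t \<noteq> bit v t)"

lemma split_level_bits_differ:
  assumes "u \<in> e" "v \<in> e" "u \<noteq> v"
  shows "\<exists>u\<in>e. \<exists>v\<in>e. bit u (split_level e) \<noteq> bit v (split_level e)"
  unfolding split_level_def
  by (rule LeastI_ex) (use assms bit_eq_iff in blast)

lemma bits_agree_below_split_level:
  assumes "u \<in> e" "v \<in> e" "i < split_level e"
  shows "bit u i = bit v i"
  using not_less_Least[OF assms(3)[unfolded split_level_def]] assms(1,2) by blast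

lemma split_level_less:
  assumes "u \<in> e" "v \<in> e" "u \<noteq> v" "\<And>x. x \<in> e \<Longrightarrow> x < 2 ^ s"
  shows "split_level e < s"
proof -
  obtain t where t: "bit u t \<noteq> bit v t"
    using assms(3) bit_eq_iff by blast
  then have "t < s"
    using not_bit_if_less_pow2 assms(1,2,4) by (metis not_less)
  moreover have "split_level e \<le> t"
    unfolding split_level_def using t assms(1,2) by (intro Least_le) blast
  ultimately show ?thesis
    by simp
qed

definition majority_bit :: "nat set \<Rightarrow> bool" where
  "majority_bit e \<longleftrightarrow> (\<exists>u\<in>e. \<exists>v\<in>e. u \<noteq> v \<and> bit u (split_level e) \<and> bit v (split_level e))"

definition majority_pair :: "nat set \<Rightarrow> nat set" where
  "majority_pair e = {u \<in> e. bit u (split_level e) = majority_bit e}"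

text \<open>The modulus exceeds the quotient of every vertex below \<open>m\<close>, so within a colour class
  either element of the majority pair determines the other.\<close>

definition triple_colour :: "nat \<Rightarrow> nat set \<Rightarrow> nat \<times> bool \<times> nat" where
  "triple_colour m e =
     (split_level e, majority_bit e,
      (\<Sum>u\<in>majority_pair e. u div 2 ^ Suc (split_level e)) mod (m div 2 ^ Suc (split_level e) + 1))"

definition partners :: "nat \<Rightarrow> nat \<Rightarrow> nat \<Rightarrow> nat \<Rightarrow> nat \<Rightarrow> bool" where
  "partners m t r x y \<longleftrightarrow> x \<noteq> y \<and> x < m \<and> y < m \<and> x mod 2 ^ Suc t = y mod 2 ^ Suc t \<and>
     (x div 2 ^ Suc t + y div 2 ^ Suc t) mod (m div 2 ^ Suc t + 1) = r"

lemma partners_sym: "partners m t r x y \<Longrightarrow> partners m t r y x"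
  unfolding partners_def by (simp add: add.commute)

lemma partners_unique:
  assumes "partners m t r x y" "partners m t r x y'"
  shows "y = y'"
proof -
  let ?Q = "2 ^ Suc t :: nat"
  let ?L = "m div ?Q + 1"
  have "(x div ?Q + y div ?Q) mod ?L = (x div ?Q + y' div ?Q) mod ?L"
    using assms unfolding partners_def by simp
  then have "y div ?Q mod ?L = y' div ?Q mod ?L"
    using cong_add_lcancel_nat[of "x div ?Q" "y div ?Q" "y' div ?Q" ?L] by (simp add: cong_def)
  moreover have "y div ?Q < ?L" "y' div ?Q < ?L"
    using assms unfolding partners_def by (simp_all add: div_le_mono le_imp_less_Suc less_imp_le)
  ultimately have "y div ?Q = y' div ?Q"
    by simp
  moreover have "y mod ?Q = y' mod ?Q"
    using assms unfolding partners_def by simp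
  ultimately show ?thesis
    by (metis div_mult_mod_eq)
qed

lemma triple_colour_partners:
  assumes "e \<in> complete_edges m 3" "triple_colour m e = (t, h, r)"
  obtains x y z where "e = {x, y, z}" "bit x t = h" "bit y t = h" "\<not> bit z t = h"
    "partners m t r x y"
proof -
  obtain a b c where abc: "e = {a, b, c}" "a \<noteq> b" "b \<noteq> c" "a \<noteq> c"
    using assms(1) by (auto simp: complete_edges_def card_3_iff)
  have t: "t = split_level e" and h: "h = majority_bit e"
    using assms(2) by (auto simp: triple_colour_def)
  have "\<not> (bit a t = bit b t \<and> bit b t = bit c t)"
    using split_level_bits_differ[of a e b] abc unfolding t by auto
  then obtain x y z where xyz: "e = {x, y, z}" "x \<noteq> y"
    "bit x t = (\<exists>u\<in>e. \<exists>v\<in>e. u \<noteq> v \<and> bit u t \<and> bit v t)" "bit y t = bit x t" "bit z t \<noteq> bit x t"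
    by (rule two_one_split[OF abc])
  have "bit x t = h"
    unfolding h majority_bit_def t[symmetric] by (fact xyz(3))
  have "majority_pair e = {x, y}"
    using xyz \<open>bit x t = h\<close> unfolding majority_pair_def t[symmetric] h[symmetric] by auto
  then have r: "r = (x div 2 ^ Suc t + y div 2 ^ Suc t) mod (m div 2 ^ Suc t + 1)"
    using assms(2) xyz(2) unfolding triple_colour_def t[symmetric] by simp
  have "bit x i = bit y i" if "i < Suc t" for i
  proof (cases "i < t")
    case True
    then show ?thesis
      using bits_agree_below_split_level[of x e y i] xyz(1) unfolding t by simp
  next
    case False
    then show ?thesis
      using that xyz(4) by (simp add: less_Suc_eq)
  qed
  then have "x mod 2 ^ Suc t = y mod 2 ^ Suc t"
    by (rule mod_pow2_eq_if_bits_eq)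
  moreover have "x < m" "y < m"
    using assms(1) xyz(1) by (auto simp: complete_edges_def)
  ultimately have "partners m t r x y"
    unfolding partners_def r using xyz(2) by simp
  then show ?thesis
    using that xyz \<open>bit x t = h\<close> by simp
qed

lemma not_berge_K3_if_one_triple_colour:
  assumes "E \<subseteq> {e \<in> complete_edges m 3. triple_colour m e = c}"
  shows "\<not> berge_K3 V E"
proof -
  obtain t h r where c: "c = (t, h, r)"
    by (rule prod_cases3)
  show ?thesis
  proof (rule not_berge_K3_if_partner_structure[where A = "{x. bit x t = h}" and partner = "partners m t r"])
    fix e assume "e \<in> E"
    then have "e \<in> complete_edges m 3" "triple_colour m e = (t, h, r)"
      using assms c by auto
    then show "\<exists>x y z. e = {x, y, z} \<and> x \<in> {x. bit x t = h} \<and> y \<in> {x. bit x t = h} \<and>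
        z \<notin> {x. bit x t = h} \<and> partners m t r x y"
      by (rule triple_colour_partners) blast
  qed (auto intro: partners_sym partners_unique)
qed

lemma sum_div_pow2_le: "(\<Sum>t<s. m div 2 ^ Suc t) + m div 2 ^ s \<le> (m :: nat)"
proof (induction s)
  case (Suc s)
  have "m div 2 ^ Suc s = m div 2 ^ s div 2"
    by (metis div_mult2_eq power_Suc2)
  then have "2 * (m div 2 ^ Suc s) \<le> m div 2 ^ s"
    by simp
  then show ?case
    using Suc by simp
qed simp

lemma card_triple_colours:
  assumes "m \<le> 2 ^ s"
  shows "card (triple_colour m ` complete_edges m 3) \<le> 2 * m + 2 * s"
proof -
  define C where "C = (SIGMA t:{..<s}. (UNIV :: bool set) \<times> {..<m div 2 ^ Suc t + 1})"
  have "triple_colour m ` complete_edges m 3 \<subseteq> C"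
  proof
    fix c assume "c \<in> triple_colour m ` complete_edges m 3"
    then obtain e where e: "e \<in> complete_edges m 3" "c = triple_colour m e"
      by blast
    then obtain a b where "a \<in> e" "b \<in> e" "a \<noteq> b"
      by (auto simp: complete_edges_def card_3_iff)
    moreover have "x < 2 ^ s" if "x \<in> e" for x
      using e(1) that assms by (auto simp: complete_edges_def)
    ultimately have "split_level e < s"
      by (rule split_level_less)
    then show "c \<in> C"
      unfolding C_def e(2) triple_colour_def by simp
  qed
  moreover have "finite C"
    unfolding C_def by simp
  ultimately have "card (triple_colour m ` complete_edges m 3) \<le> card C"
    by (rule card_mono[rotated])
  also have "card C = (\<Sum>t<s. 2 * (m div 2 ^ Suc t) + 2)"
    unfolding C_def by (simp add: card_SigmaI card_cartesian_product)
  also have "\<dots> = 2 * (\<Sum>t<s. m div 2 ^ Suc t) + 2 * s"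
    by (simp only: sum.distrib sum_distrib_left) simp
  also have "\<dots> \<le> 2 * m + 2 * s"
    using sum_div_pow2_le[where s = s and m = m] by linarith
  finally show ?thesis .
qed

lemma not_ramsey_prop_if_colouring:
  assumes "card (c ` complete_edges n r) \<le> k"
    and "\<And>i V E. E \<subseteq> {e \<in> complete_edges n r. c e = i} \<Longrightarrow> \<not> F V E"
  shows "\<not> ramsey_prop r F k n"
proof
  let ?C = "c ` complete_edges n r"
  have "finite (complete_edges n r)"
    unfolding complete_edges_def by (rule finite_subset[of _ "Pow {..<n}"]) auto
  then obtain g where g: "bij_betw g ?C {0..<card ?C}"
    using ex_bij_betw_finite_nat by blast
  then have g_less: "\<forall>e\<in>complete_edges n r. g (c e) < k"
    using assms(1) bij_betwE by fastforce
  assume "ramsey_prop r F k n"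
  then have "(\<forall>e\<in>complete_edges n r. g (c e) < k) \<longrightarrow> (\<exists>i<k. \<exists>V E. V \<subseteq> {..<n} \<and> E \<subseteq> {e \<in> complete_edges n r. g (c e) = i} \<and>
      (\<forall>e\<in>E. e \<subseteq> V) \<and> F V E)"
    unfolding ramsey_prop_def by (rule spec)
  then obtain i V E where E: "E \<subseteq> {e \<in> complete_edges n r. g (c e) = i}" "F V E"
    using g_less by blast
  have "E \<subseteq> {e \<in> complete_edges n r. c e = inv_into ?C g i}"
    using E(1) g by (auto simp: bij_betw_def inv_into_f_f)
  then show False
    using assms(2) E(2) by blast
qed

lemma not_ramsey_prop_3_berge_K3:
  assumes "m \<le> 2 ^ s" "2 * m + 2 * s \<le> k"
  shows "\<not> ramsey_prop 3 berge_K3 k m"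
  using card_triple_colours[OF assms(1)] assms(2) not_berge_K3_if_one_triple_colour
  by (intro not_ramsey_prop_if_colouring[where c = "triple_colour m"]) auto

lemma le_ramsey_number_3_berge_K3:
  assumes "k \<le> 2 ^ s"
  shows "k \<le> 2 * ramsey_number 3 berge_K3 k + 2 * s"
proof (rule ccontr)
  let ?R = "ramsey_number 3 berge_K3 k"
  assume "\<not> k \<le> 2 * ?R + 2 * s"
  then have "?R \<le> 2 ^ s" "2 * ?R + 2 * s \<le> k"
    using assms by linarith+
  then have "\<not> ramsey_prop 3 berge_K3 k ?R"
    by (rule not_ramsey_prop_3_berge_K3)
  moreover have "ramsey_prop 3 berge_K3 k ?R"
    unfolding ramsey_number_def by (rule LeastI) (rule ramsey_prop_3_berge_K3_three_quarters)
  ultimately show False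
    by contradiction
qed

lemma eventually_log_add_le:
  fixes \<epsilon> c :: real
  assumes "\<epsilon> > 0"
  shows "\<forall>\<^sub>F k in at_top. log 2 (real k) + c \<le> \<epsilon> * real k"
proof -
  have "((\<lambda>k. (ln (real k) / real k) / ln 2 + c / real k) \<longlongrightarrow> 0 / ln 2 + 0) at_top"
    by (intro tendsto_add tendsto_divide tendsto_const lim_const_over_n
        filterlim_compose[OF ln_x_over_x_tendsto_0 filterlim_real_sequentially]) simp
  then have "\<forall>\<^sub>F k in at_top. (ln (real k) / real k) / ln 2 + c / real k < \<epsilon>"
    using assms by (simp add: order_tendstoD(2))
  moreover have "\<forall>\<^sub>F k in at_top. (1::nat) \<le> k"
    by (rule eventually_ge_at_top)
  ultimately show ?thesis
  proof eventually_elim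
    case (elim k)
    then have "(log 2 (real k) + c) / real k < \<epsilon>"
      by (simp add: log_def add_divide_distrib mult.commute)
    then show ?case
      using elim(2) by (simp add: field_simps)
  qed
qed

lemma ex_pow2_ge:
  assumes "1 \<le> k"
  obtains s where "k \<le> 2 ^ s" "real s \<le> log 2 (real k) + 1"
proof
  let ?s = "nat \<lceil>log 2 (real k)\<rceil>"
  have "log 2 (real k) \<ge> 0"
    using assms by simp
  then show "real ?s \<le> log 2 (real k) + 1"
    by linarith
  have "real k = 2 powr log 2 (real k)"
    using assms by simp
  also have "\<dots> \<le> 2 powr real ?s"
    by (intro powr_mono) linarith+
  also have "\<dots> = real (2 ^ ?s)"
    by (simp add: powr_realpow)
  finally show "k \<le> 2 ^ ?s"
    by linarith
qed

theorem theorem1: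
  shows "\<forall>\<epsilon>>0. \<forall>\<^sub>F k in at_top.
           real k / 2 - \<epsilon> * real k \<le> real (ramsey_number 3 berge_K3 k) \<and>
           real (ramsey_number 3 berge_K3 k) \<le> 3 * real k / 4 + \<epsilon> * real k"
proof (intro allI impI)
  fix \<epsilon> :: real
  assume "\<epsilon> > 0"
  then have "\<forall>\<^sub>F k in at_top. log 2 (real k) + 4 \<le> \<epsilon> * real k"
    by (rule eventually_log_add_le)
  moreover have "\<forall>\<^sub>F k in at_top. (1::nat) \<le> k"
    by (rule eventually_ge_at_top)
  ultimately show "\<forall>\<^sub>F k in at_top.
      real k / 2 - \<epsilon> * real k \<le> real (ramsey_number 3 berge_K3 k) \<and>
      real (ramsey_number 3 berge_K3 k) \<le> 3 * real k / 4 + \<epsilon> * real k"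
  proof eventually_elim
    case (elim k)
    obtain s where s: "k \<le> 2 ^ s" "real s \<le> log 2 (real k) + 1"
      using ex_pow2_ge[OF elim(2)] .
    have "real k \<le> 2 * real (ramsey_number 3 berge_K3 k) + 2 * real s"
      using le_ramsey_number_3_berge_K3[OF s(1)] by linarith
    moreover have "real (ramsey_number 3 berge_K3 k) \<le> 3 * real k / 4 + 4"
      using ramsey_number_3_berge_K3_le[of k] by linarith
    moreover have "log 2 (real k) \<ge> 0"
      using elim(2) by simp
    ultimately show ?case
      using elim(1) s(2) by linarith
  qed
qed

end
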